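(* Let $F$ be a field, let $G$ be a bipartite graph on $n$ vertices, and let $k\ge 2$ be an integer. If $\mathcal{I}_F(G)\neq\emptyset$, then $$f(G\Box C_{2k})=n.$$
   Context: All graphs are finite and simple. For a graph $H$ with a perfect matching $M$, a subset $S\subseteq M$ is a forcing set of $M$ if $S$ is contained in no other perfect matching of $H$; the forcing number $f(H,M)$ is the minimum size of a forcing set of $M$, and the minimum forcing number $f(H)$ is the minimum of $f(H,M)$ over all perfect matchings $M$ of $H$. A weighted adjacency matrix of a graph $G$ over a field $F$ is a matrix over $F$ with rows and columns indexed by $V(G)$ whose $(u,v)$ entry is nonzero if and only if $u$ and $v$ are adjacent in $G$. A matrix $A$ is involutory if $A^{-1}=A$ (i.e. $A^2=I$). $\mathcal{I}_F(G)$ denotes the set of weighted adjacency matrices of $G$ over $F$ that are involutory. $C_{2k}$ is the cycle on $2k$ vertices. The Cartesian product $G\Box H$ has vertex set $V(G)\times V(H)$, with $(g_1,h_1)$ and $(g_2,h_2)$ adjacent iff either $g_1=g_2$ and $h_1h_2\in E(H)$, or $h_1=h_2$ and $g_1g_2\in E(G)$. *)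

theory Defs
  imports Main
begin

type_synonym 'a graph = "'a set \<times> 'a set set"

definition verts :: "'a graph \<Rightarrow> 'a set" where "verts G = fst G"
definition edges :: "'a graph \<Rightarrow> 'a set set" where "edges G = snd G"

definition simple_graph :: "'a graph \<Rightarrow> bool" where
  "simple_graph G \<longleftrightarrow> finite (verts G) \<and>
     (\<forall>e\<in>edges G. \<exists>u v. u \<noteq> v \<and> u \<in> verts G \<and> v \<in> verts G \<and> e = {u, v})"

definition adjacent :: "'a graph \<Rightarrow> 'a \<Rightarrow> 'a \<Rightarrow> bool" where
  "adjacent G u v \<longleftrightarrow> {u, v} \<in> edges G"

definition bipartite :: "'a graph \<Rightarrow> bool" where
  "bipartite G \<longleftrightarrow> (\<exists>A B. A \<union> B = verts G \<and> A \<inter> B = {} \<and>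
     (\<forall>e\<in>edges G. \<exists>a b. a \<in> A \<and> b \<in> B \<and> e = {a, b}))"

definition perfect_matching :: "'a graph \<Rightarrow> 'a set set \<Rightarrow> bool" where
  "perfect_matching G M \<longleftrightarrow> M \<subseteq> edges G \<and> (\<forall>v\<in>verts G. \<exists>!e. e \<in> M \<and> v \<in> e)"

definition forcing_set :: "'a graph \<Rightarrow> 'a set set \<Rightarrow> 'a set set \<Rightarrow> bool" where
  "forcing_set G M S \<longleftrightarrow> S \<subseteq> M \<and>
     (\<forall>M'. perfect_matching G M' \<and> S \<subseteq> M' \<longrightarrow> M' = M)"

definition forcing_number :: "'a graph \<Rightarrow> 'a set set \<Rightarrow> nat" where
  "forcing_number G M = Min {card S | S. forcing_set G M S}"

definition min_forcing_number :: "'a graph \<Rightarrow> nat" where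
  "min_forcing_number G = Min {forcing_number G M | M. perfect_matching G M}"

text \<open>Weighted adjacency matrices over a field (matrices indexed by V, given as
  functions whose values outside V x V are irrelevant), and involutory ones.\<close>

definition weighted_adjacency :: "'a graph \<Rightarrow> ('a \<Rightarrow> 'a \<Rightarrow> 'f::field) \<Rightarrow> bool" where
  "weighted_adjacency G A \<longleftrightarrow>
     (\<forall>u\<in>verts G. \<forall>v\<in>verts G. A u v \<noteq> 0 \<longleftrightarrow> adjacent G u v)"

definition involutory :: "'a set \<Rightarrow> ('a \<Rightarrow> 'a \<Rightarrow> 'f::field) \<Rightarrow> bool" where
  "involutory V A \<longleftrightarrow>
     (\<forall>u\<in>V. \<forall>v\<in>V. (\<Sum>w\<in>V. A u w * A w v) = (if u = v then 1 else 0))"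

definition involutory_wadj :: "'a graph \<Rightarrow> ('a \<Rightarrow> 'a \<Rightarrow> 'f::field) set" where
  "involutory_wadj G = {A. weighted_adjacency G A \<and> involutory (verts G) A}"

definition cart_prod :: "'a graph \<Rightarrow> 'b graph \<Rightarrow> ('a \<times> 'b) graph" where
  "cart_prod G H =
     (verts G \<times> verts H,
      {{(g, h1), (g, h2)} | g h1 h2. g \<in> verts G \<and> {h1, h2} \<in> edges H} \<union>
      {{(g1, h), (g2, h)} | g1 g2 h. {g1, g2} \<in> edges G \<and> h \<in> verts H})"

definition cycle :: "nat \<Rightarrow> nat graph" where
  "cycle m = ({0..<m}, {{i, (i + 1) mod m} | i. i < m})"

end

theory Submission
  imports Defs "HOL-Computational_Algebra.Polynomial"
begin

(* Upper bound: match each copy of C_2k in G \<box> C_2k along one of its two perfect matchings,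
   the choice alternating with the side of G.  One edge per copy forces all the others,
   layer by layer around the cycle.

   Lower bound: from an involutory weighted adjacency matrix A of G one builds a weighted
   adjacency matrix W of G \<box> C_2k over F[t] with 2n linearly independent kernel vectors.
   In a bipartite graph a kernel vector of W that vanishes on the vertices covered by a
   forcing set S vanishes everywhere: otherwise its support inside one colour class carries
   alternating cycles that avoid S.  Hence 2n \<le> |\<Union>S| \<le> 2|S|. *)

section \<open>Perfect matchings\<close>

lemma simple_graph_edgeE:
  assumes "simple_graph H" "e \<in> edges H"
  obtains u v where "u \<noteq> v" "u \<in> verts H" "v \<in> verts H" "e = {u, v}"
  using assms unfolding simple_graph_def by blast

lemma simple_graph_edge_verts:
  "simple_graph H \<Longrightarrow> {u, v} \<in> edges H \<Longrightarrow> u \<noteq> v \<and> u \<in> verts H \<and> v \<in> verts H"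
  by (elim simple_graph_edgeE) (auto simp: doubleton_eq_iff)

lemma finite_edges: "simple_graph H \<Longrightarrow> finite (edges H)"
  by (rule finite_subset[of _ "Pow (verts H)"]) (auto simp: simple_graph_def)

lemma perfect_matching_edge_unique:
  "perfect_matching H M \<Longrightarrow> v \<in> verts H \<Longrightarrow> e \<in> M \<Longrightarrow> e' \<in> M \<Longrightarrow> v \<in> e \<Longrightarrow> v \<in> e' \<Longrightarrow> e = e'"
  unfolding perfect_matching_def by blast

definition mate :: "'a set set \<Rightarrow> 'a \<Rightarrow> 'a" where
  "mate M v = (THE u. {v, u} \<in> M)"

lemma mate_eqI:
  assumes "perfect_matching H M" "v \<in> verts H" "{v, u} \<in> M"
  shows "mate M v = u"
  unfolding mate_def
proof (rule the_equality)
  show "u' = u" if "{v, u'} \<in> M" for u'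
    using perfect_matching_edge_unique[OF assms(1,2) that assms(3)] by (auto simp: doubleton_eq_iff)
qed (fact assms(3))

lemma mate_in_matching:
  assumes H: "simple_graph H" and M: "perfect_matching H M" and v: "v \<in> verts H"
  shows "{v, mate M v} \<in> M" "mate M v \<noteq> v" "mate M v \<in> verts H"
proof -
  obtain e where e: "e \<in> M" "v \<in> e" using M v unfolding perfect_matching_def by blast
  then have "e \<in> edges H" using M unfolding perfect_matching_def by auto
  then obtain a b where ab: "a \<noteq> b" "a \<in> verts H" "b \<in> verts H" "e = {a, b}"
    by (rule simple_graph_edgeE[OF H])
  then obtain u where u: "e = {v, u}" "u \<noteq> v" "u \<in> verts H"
    using e(2) by (auto simp: insert_commute)
  then have "mate M v = u" using mate_eqI[OF M v] e(1) by simp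
  then show "{v, mate M v} \<in> M" "mate M v \<noteq> v" "mate M v \<in> verts H" using e(1) u by auto
qed

lemma mate_mate:
  assumes "simple_graph H" "perfect_matching H M" "v \<in> verts H"
  shows "mate M (mate M v) = v"
  using mate_eqI[OF assms(2) mate_in_matching(3)[OF assms]] mate_in_matching(1)[OF assms]
  by (simp add: insert_commute)

lemma perfect_matching_edge_eq_mate:
  assumes "simple_graph H" "perfect_matching H M" "e \<in> M" "v \<in> e"
  shows "e = {v, mate M v}"
proof -
  have "e \<in> edges H" using assms(2,3) unfolding perfect_matching_def by auto
  then have "v \<in> verts H" using assms(1,4) by (auto elim: simple_graph_edgeE)
  then show ?thesis
    using perfect_matching_edge_unique[OF assms(2) _ assms(3) mate_in_matching(1)[OF assms(1,2)]]
      assms(4)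
    by simp
qed

lemma perfect_matching_of_involution:
  assumes "\<And>v. v \<in> verts H \<Longrightarrow> m v \<in> verts H \<and> m v \<noteq> v \<and> m (m v) = v \<and> {v, m v} \<in> edges H"
  shows "perfect_matching H {{v, m v} | v. v \<in> verts H}"
  unfolding perfect_matching_def
proof (intro conjI ballI)
  fix v assume v: "v \<in> verts H"
  have "e = {v, m v}" if e: "e \<in> {{v, m v} | v. v \<in> verts H}" "v \<in> e" for e
  proof -
    obtain u where u: "u \<in> verts H" "e = {u, m u}" using e(1) by blast
    then have "v = u \<or> v = m u" using e(2) by auto
    then show ?thesis using u assms[of u] by (auto simp: insert_commute)
  qed
  then show "\<exists>!e. e \<in> {{v, m v} | v. v \<in> verts H} \<and> v \<in> e" using v by blast
qed (use assms in blast)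

lemma perfect_matching_subset_eq:
  assumes "simple_graph H" "perfect_matching H M" "perfect_matching H M'" "M \<subseteq> M'"
  shows "M' = M"
proof
  show "M' \<subseteq> M"
  proof
    fix e assume e: "e \<in> M'"
    then obtain u v where uv: "u \<in> verts H" "e = {u, v}"
      using assms(1,3) unfolding perfect_matching_def by (blast elim: simple_graph_edgeE)
    have uM: "{u, mate M u} \<in> M" by (rule mate_in_matching(1)[OF assms(1,2) uv(1)])
    then have "mate M' u = mate M u" using mate_eqI[OF assms(3) uv(1)] assms(4) by blast
    moreover have "e = {u, mate M' u}"
      using perfect_matching_edge_eq_mate[OF assms(1,3) e] uv by simp
    ultimately show "e \<in> M" using uM by simp
  qed
qed (fact assms(4))

lemma forcing_set_self:
  "simple_graph H \<Longrightarrow> perfect_matching H M \<Longrightarrow> forcing_set H M M"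
  unfolding forcing_set_def by (metis perfect_matching_subset_eq order_refl)

lemma min_forcing_number_eqI:
  assumes H: "simple_graph H" and M: "perfect_matching H M" "forcing_set H M S" "card S = n"
    and lower: "\<And>M S. perfect_matching H M \<Longrightarrow> forcing_set H M S \<Longrightarrow> n \<le> card S"
  shows "min_forcing_number H = n"
proof -
  have fin: "finite {card S | S. forcing_set H M' S}" if "perfect_matching H M'" for M'
  proof (rule finite_subset)
    show "{card S | S. forcing_set H M' S} \<subseteq> card ` Pow (edges H)"
      using that unfolding forcing_set_def perfect_matching_def by (auto intro!: imageI)
  qed (simp add: finite_edges[OF H])
  have ge: "n \<le> forcing_number H M'" if M': "perfect_matching H M'" for M'
  proof -
    have "{card S | S. forcing_set H M' S} \<noteq> {}" using forcing_set_self[OF H M'] by blast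
    then show ?thesis
      unfolding forcing_number_def using fin[OF M'] lower[OF M'] by (subst Min_ge_iff) blast+
  qed
  have "forcing_number H M = n"
    unfolding forcing_number_def using fin[OF M(1)] lower[OF M(1)] M(2,3) by (intro Min_eqI) blast+
  moreover have "finite {forcing_number H M | M. perfect_matching H M}"
  proof (rule finite_subset)
    show "{forcing_number H M | M. perfect_matching H M} \<subseteq> forcing_number H ` Pow (edges H)"
      unfolding perfect_matching_def by (auto intro!: imageI)
  qed (simp add: finite_edges[OF H])
  ultimately show ?thesis
    unfolding min_forcing_number_def using M(1) ge by (intro Min_eqI) blast+
qed

lemma mate_eq_last_free_neighbour:
  assumes H: "simple_graph H" and M: "perfect_matching H M" and v: "v \<in> verts H"
    and others: "\<And>w. {v, w} \<in> edges H \<Longrightarrow> w \<noteq> u \<Longrightarrow> mate M w \<noteq> v"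
  shows "mate M v = u"
proof (rule ccontr)
  assume "mate M v \<noteq> u"
  moreover have "{v, mate M v} \<in> edges H"
    using mate_in_matching(1)[OF H M v] M unfolding perfect_matching_def by auto
  ultimately show False using others mate_mate[OF H M v] by blast
qed

text \<open>The mate function after switching \<open>M\<close> along the alternating cycles
  \<open>c, mate M c, f c, mate M (f c), \<dots>\<close> through \<open>C\<close>: now \<open>f c\<close> is matched to \<open>mate M c\<close>.\<close>

definition switch_mate :: "'a set set \<Rightarrow> 'a set \<Rightarrow> ('a \<Rightarrow> 'a) \<Rightarrow> 'a \<Rightarrow> 'a" where
  "switch_mate M C f v =
     (if v \<in> C then mate M (the_inv_into C f v)
      else if mate M v \<in> C then f (mate M v) else mate M v)"

lemma switch_mate_involution:
  assumes H: "simple_graph H" and M: "perfect_matching H M"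
    and C: "C \<subseteq> verts H" "\<And>c. c \<in> C \<Longrightarrow> mate M c \<notin> C"
    and f: "bij_betw f C C" "\<And>c. c \<in> C \<Longrightarrow> {mate M c, f c} \<in> edges H"
    and v: "v \<in> verts H"
  shows "switch_mate M C f v \<in> verts H \<and> switch_mate M C f v \<noteq> v \<and>
    switch_mate M C f (switch_mate M C f v) = v \<and> {v, switch_mate M C f v} \<in> edges H"
proof -
  let ?m = "mate M" and ?m' = "switch_mate M C f" and ?g = "the_inv_into C f"
  have g: "?g c \<in> C" "f (?g c) = c" if "c \<in> C" for c
    using bij_betwE[OF bij_betw_the_inv_into[OF f(1)]] f_the_inv_into_f_bij_betw[OF f(1)] that
    by auto
  have gf: "?g (f c) = c" and fC: "f c \<in> C" if "c \<in> C" for c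
    using the_inv_into_f_f[OF bij_betw_imp_inj_on[OF f(1)] that] bij_betwE[OF f(1)] that by auto
  note m = mate_in_matching[OF H M] mate_mate[OF H M]
  consider "v \<in> C" | "v \<notin> C" "?m v \<in> C" | "v \<notin> C" "?m v \<notin> C" by blast
  then show ?thesis
  proof cases
    case 1
    then have "?g v \<in> C" "f (?g v) = v" using g by auto
    then show ?thesis
      using 1 C m[of "?g v"] f(2)[of "?g v"] by (auto simp: switch_mate_def insert_commute)
  next
    case 2
    define c where "c = ?m v"
    have c: "c \<in> C" "v = ?m c" using 2 m(4)[OF v] by (auto simp: c_def)
    have "?m' v = f c" using 2 by (simp add: c_def switch_mate_def)
    moreover have "?m' (f c) = ?m c" using c(1) fC gf by (auto simp: switch_mate_def)
    ultimately show ?thesis using 2(1) c C(1) fC[OF c(1)] f(2)[OF c(1)] by auto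
  next
    case 3
    have "?m v \<in> verts H" "{v, ?m v} \<in> edges H"
      using m(1,3)[OF v] M unfolding perfect_matching_def by auto
    then show ?thesis using 3 m(2,4)[OF v] by (auto simp: switch_mate_def)
  qed
qed

lemma perfect_matching_switch:
  assumes H: "simple_graph H" and M: "perfect_matching H M"
    and C: "C \<subseteq> verts H" "C \<noteq> {}" "\<And>c. c \<in> C \<Longrightarrow> mate M c \<notin> C"
    and f: "bij_betw f C C" "\<And>c. c \<in> C \<Longrightarrow> f c \<noteq> c" "\<And>c. c \<in> C \<Longrightarrow> {mate M c, f c} \<in> edges H"
  shows "\<exists>M'. perfect_matching H M' \<and> M' \<noteq> M \<and> (\<forall>e\<in>M. e \<inter> C = {} \<longrightarrow> e \<in> M')"
proof -
  let ?m = "mate M" and ?m' = "switch_mate M C f"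
  define M' where "M' = {{v, ?m' v} | v. v \<in> verts H}"
  have pm: "perfect_matching H M'"
    unfolding M'_def using switch_mate_involution[OF H M C(1,3) f(1,3)]
    by (rule perfect_matching_of_involution)
  obtain c where c: "c \<in> C" using C(2) by blast
  have fc: "f c \<in> C" "the_inv_into C f (f c) = c"
    using the_inv_into_f_f[OF bij_betw_imp_inj_on[OF f(1)] c] bij_betwE[OF f(1)] c by auto
  then have "?m' (f c) = ?m c" by (simp add: switch_mate_def)
  then have new: "{f c, ?m c} \<in> M'" using c fc C(1) unfolding M'_def by force
  have "{f c, ?m c} \<notin> M"
  proof
    assume "{f c, ?m c} \<in> M"
    then have "?m (?m c) = f c"
      using mate_eqI[OF M mate_in_matching(3)[OF H M]] c C(1) by (auto simp: insert_commute)
    then show False using mate_mate[OF H M, of c] c C(1) f(2)[OF c] by auto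
  qed
  then have "M' \<noteq> M" using new by blast
  moreover have "e \<in> M'" if e: "e \<in> M" "e \<inter> C = {}" for e
  proof -
    obtain v where v: "v \<in> verts H" "e = {v, ?m v}"
      using e(1) M H unfolding perfect_matching_def
      by (metis perfect_matching_edge_eq_mate[OF H M e(1)] simple_graph_edgeE subsetD insertI1)
    then have "?m' v = ?m v" using e(2) by (simp add: switch_mate_def)
    then show ?thesis using v unfolding M'_def by auto
  qed
  ultimately show ?thesis using pm by blast
qed

section \<open>Kernel vectors and forcing sets\<close>

lemma sum_eliminate_coordinate:
  fixes v :: "'i \<Rightarrow> 't \<Rightarrow> 'r::comm_ring"
  assumes "finite I" "i0 \<in> I"
  shows "(\<Sum>i\<in>I. (if i = i0 then - (\<Sum>j\<in>I - {i0}. c j * v j t) else c i * v i0 t) * v i s)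
       = (\<Sum>i\<in>I - {i0}. c i * (v i0 t * v i s - v i t * v i0 s))"
proof -
  have "(\<Sum>i\<in>I. (if i = i0 then - (\<Sum>j\<in>I - {i0}. c j * v j t) else c i * v i0 t) * v i s)
      = - (\<Sum>j\<in>I - {i0}. c j * v j t) * v i0 s + (\<Sum>i\<in>I - {i0}. c i * v i0 t * v i s)"
    using assms by (simp add: sum.remove)
  also have "\<dots> = (\<Sum>i\<in>I - {i0}. c i * (v i0 t * v i s - v i t * v i0 s))"
    by (simp add: sum_distrib_left sum_distrib_right sum_subtractf algebra_simps)
  finally show ?thesis .
qed

lemma nontrivial_vanishing_combination:
  fixes v :: "'i \<Rightarrow> 't \<Rightarrow> 'r::idom"
  assumes "finite T" "finite I" "card T < card I"
  shows "\<exists>c. (\<exists>i\<in>I. c i \<noteq> 0) \<and> (\<forall>t\<in>T. (\<Sum>i\<in>I. c i * v i t) = 0)"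
  using assms
proof (induction T arbitrary: I v rule: finite_induct)
  case empty
  then show ?case by (intro exI[of _ "\<lambda>_. 1"]) (auto simp: card_gt_0_iff)
next
  case (insert t T)
  show ?case
  proof (cases "\<forall>i\<in>I. v i t = 0")
    case True
    with insert show ?thesis by auto
  next
    case False
    then obtain i0 where i0: "i0 \<in> I" "v i0 t \<noteq> 0" by auto
    define v' where "v' i s = v i0 t * v i s - v i t * v i0 s" for i s
    have "card T < card (I - {i0})" using insert i0 by auto
    then obtain c' where c': "\<exists>i\<in>I - {i0}. c' i \<noteq> 0" "\<forall>s\<in>T. (\<Sum>i\<in>I - {i0}. c' i * v' i s) = 0"
      using insert.IH[of "I - {i0}" v'] insert.prems by auto
    define c where "c i = (if i = i0 then - (\<Sum>j\<in>I - {i0}. c' j * v j t) else c' i * v i0 t)" for i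
    have c_eq: "(\<Sum>i\<in>I. c i * v i s) = (\<Sum>i\<in>I - {i0}. c' i * v' i s)" for s
      unfolding c_def v'_def using sum_eliminate_coordinate[OF insert.prems(1) i0(1)] .
    have "\<exists>i\<in>I. c i \<noteq> 0" using c'(1) i0 by (auto simp: c_def)
    moreover have "(\<Sum>i\<in>I. c i * v i s) = 0" if "s \<in> insert t T" for s
      using that c'(2) by (auto simp: c_eq v'_def mult.commute)
    ultimately show ?thesis by blast
  qed
qed

lemma finite_self_map_bij_subset:
  assumes "finite Z" "Z \<noteq> {}" "f ` Z \<subseteq> Z"
  obtains C where "C \<subseteq> Z" "C \<noteq> {}" "bij_betw f C C"
proof -
  define P where "P C \<longleftrightarrow> C \<subseteq> Z \<and> C \<noteq> {} \<and> f ` C \<subseteq> C" for C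
  obtain C where C: "P C" and least: "\<And>C'. P C' \<Longrightarrow> card C \<le> card C'"
    using ex_has_least_nat[of P Z card] assms unfolding P_def by blast
  have fin: "finite C" using C assms(1) finite_subset unfolding P_def by blast
  have "P (f ` C)" using C unfolding P_def by auto
  then have "card C \<le> card (f ` C)" by (rule least)
  then have "card (f ` C) = card C" using card_image_le[OF fin, of f] by linarith
  then have "f ` C = C" "inj_on f C"
    using C fin card_subset_eq eq_card_imp_inj_on unfolding P_def by blast+
  then show ?thesis using that C unfolding P_def bij_betw_def by blast
qed

text \<open>\<open>weighted_adjacency\<close> with coefficients in an arbitrary ring: the lower bound
  uses weights in \<open>F[t]\<close>, which is not a field.\<close>

definition ring_weighted_adjacency :: "'a graph \<Rightarrow> ('a \<Rightarrow> 'a \<Rightarrow> 'r::zero) \<Rightarrow> bool" where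
  "ring_weighted_adjacency H W \<longleftrightarrow>
     (\<forall>u\<in>verts H. \<forall>v\<in>verts H. W u v \<noteq> 0 \<longleftrightarrow> adjacent H u v)"

definition kernel_vector :: "'a graph \<Rightarrow> ('a \<Rightarrow> 'a \<Rightarrow> 'r::comm_semiring_0) \<Rightarrow> ('a \<Rightarrow> 'r) \<Rightarrow> bool" where
  "kernel_vector H W x \<longleftrightarrow> (\<forall>u\<in>verts H. (\<Sum>v\<in>verts H. W u v * x v) = 0)"

definition colour_class :: "'a graph \<Rightarrow> 'a set \<Rightarrow> bool" where
  "colour_class H D \<longleftrightarrow> (\<forall>u v. {u, v} \<in> edges H \<longrightarrow> (u \<in> D \<longleftrightarrow> v \<notin> D))"

lemma kernel_vector_support_mate_neighbour:
  fixes W :: "'a \<Rightarrow> 'a \<Rightarrow> 'r::idom"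
  assumes H: "simple_graph H" and M: "perfect_matching H M"
    and W: "ring_weighted_adjacency H W" and x: "kernel_vector H W x"
    and z: "z \<in> verts H" "x z \<noteq> 0"
  shows "\<exists>u\<in>verts H. x u \<noteq> 0 \<and> u \<noteq> z \<and> {mate M z, u} \<in> edges H"
proof (rule ccontr)
  assume none: "\<not> ?thesis"
  let ?V = "verts H" and ?m = "mate M z"
  have fin: "finite ?V" using H unfolding simple_graph_def by simp
  have m: "?m \<in> ?V" "{z, ?m} \<in> edges H"
    using mate_in_matching[OF H M z(1)] M unfolding perfect_matching_def by auto
  have "W ?m u * x u = 0" if u: "u \<in> ?V - {z}" for u
  proof (cases "x u = 0")
    case False
    then have "W ?m u = 0"
      using none u W m(1) unfolding ring_weighted_adjacency_def adjacent_def by blast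
    then show ?thesis by simp
  qed simp
  then have "(\<Sum>u\<in>?V. W ?m u * x u) = W ?m z * x z"
    using fin z(1) by (simp add: sum.remove sum.neutral)
  moreover have "W ?m z \<noteq> 0"
    using m W z(1) unfolding ring_weighted_adjacency_def adjacent_def by (simp add: insert_commute)
  ultimately show False using x m(1) z(2) unfolding kernel_vector_def by simp
qed

text \<open>On a part \<open>C\<close> of the support of \<open>x\<close> where the neighbour map \<open>f\<close> is bijective, the edges
  \<open>{mate M c, f c}\<close> give alternating cycles avoiding \<open>\<Union>S\<close>.\<close>

lemma kernel_vector_not_forcing_set:
  fixes W :: "'a \<Rightarrow> 'a \<Rightarrow> 'r::idom"
  assumes H: "simple_graph H" and M: "perfect_matching H M" "S \<subseteq> M"
    and D: "colour_class H D" and W: "ring_weighted_adjacency H W" and x: "kernel_vector H W x"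
    and supp: "\<And>v. x v \<noteq> 0 \<Longrightarrow> v \<in> D \<and> v \<notin> \<Union>S"
    and nz: "a \<in> verts H" "x a \<noteq> 0"
  shows "\<not> forcing_set H M S"
proof -
  define Z where "Z = {v \<in> verts H. x v \<noteq> 0}"
  have "\<forall>z\<in>Z. \<exists>u. u \<in> Z \<and> u \<noteq> z \<and> {mate M z, u} \<in> edges H"
    using kernel_vector_support_mate_neighbour[OF H M(1) W x] unfolding Z_def by blast
  then obtain f where f: "\<forall>z\<in>Z. f z \<in> Z \<and> f z \<noteq> z \<and> {mate M z, f z} \<in> edges H"
    by metis
  have "finite Z" using H unfolding Z_def simple_graph_def by simp
  moreover have "Z \<noteq> {}" "f ` Z \<subseteq> Z" using nz f unfolding Z_def by auto
  ultimately obtain C where C: "C \<subseteq> Z" "C \<noteq> {}" "bij_betw f C C"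
    by (rule finite_self_map_bij_subset)
  have "mate M c \<notin> C" if c: "c \<in> C" for c
  proof -
    have "c \<in> verts H" "c \<in> D" using c C(1) supp unfolding Z_def by auto
    moreover from this(1) have "{c, mate M c} \<in> edges H"
      using mate_in_matching(1)[OF H M(1)] M(1) unfolding perfect_matching_def by blast
    ultimately show ?thesis using C(1) D supp unfolding Z_def colour_class_def by blast
  qed
  then have "\<exists>M'. perfect_matching H M' \<and> M' \<noteq> M \<and> (\<forall>e\<in>M. e \<inter> C = {} \<longrightarrow> e \<in> M')"
    using C f by (intro perfect_matching_switch[OF H M(1)]) (auto simp: Z_def)
  then obtain M' where M': "perfect_matching H M'" "M' \<noteq> M" and keep: "\<forall>e\<in>M. e \<inter> C = {} \<longrightarrow> e \<in> M'"
    by blast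
  have "e \<inter> C = {}" if "e \<in> S" for e
    using supp that C(1) unfolding Z_def by blast
  then have "S \<subseteq> M'" using keep M(2) by (meson subsetD subsetI)
  then show ?thesis using M' unfolding forcing_set_def by auto
qed

lemma kernel_vector_restrict_colour_class:
  assumes D: "colour_class H D" and W: "ring_weighted_adjacency H W" and x: "kernel_vector H W x"
  shows "kernel_vector H W (\<lambda>v. if v \<in> D then x v else 0)"
  unfolding kernel_vector_def
proof
  fix u assume u: "u \<in> verts H"
  have "W u v * (if v \<in> D then x v else 0) = (if u \<in> D then 0 else W u v * x v)"
    if v: "v \<in> verts H" for v
  proof (cases "{u, v} \<in> edges H")
    case True
    then show ?thesis using D unfolding colour_class_def by auto
  next
    case False
    then have "W u v = 0" using W u v unfolding ring_weighted_adjacency_def adjacent_def by blast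
    then show ?thesis by simp
  qed
  then show "(\<Sum>v\<in>verts H. W u v * (if v \<in> D then x v else 0)) = 0"
    using x u unfolding kernel_vector_def by (cases "u \<in> D") simp_all
qed

lemma kernel_vector_eq_0_if_eq_0_on_forcing_set:
  fixes W :: "'a \<Rightarrow> 'a \<Rightarrow> 'r::idom"
  assumes H: "simple_graph H" and D: "colour_class H D" and W: "ring_weighted_adjacency H W"
    and x: "kernel_vector H W x" and M: "perfect_matching H M" "forcing_set H M S"
    and S0: "\<And>v. v \<in> \<Union>S \<Longrightarrow> x v = 0" and v: "v \<in> verts H"
  shows "x v = 0"
proof (rule ccontr)
  assume nz: "x v \<noteq> 0"
  have SM: "S \<subseteq> M" using M(2) unfolding forcing_set_def by blast
  define D' where "D' = (if v \<in> D then D else - D)"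
  have D': "colour_class H D'" "v \<in> D'" using D unfolding D'_def colour_class_def by auto
  have kv: "kernel_vector H W (\<lambda>u. if u \<in> D' then x u else 0)"
    by (rule kernel_vector_restrict_colour_class[OF D'(1) W x])
  have supp: "u \<in> D' \<and> u \<notin> \<Union>S" if "(if u \<in> D' then x u else 0) \<noteq> 0" for u
    using that S0 by (auto split: if_splits)
  have "(if v \<in> D' then x v else 0) \<noteq> 0" using nz D'(2) by simp
  then have "\<not> forcing_set H M S"
    using kernel_vector_not_forcing_set[OF H M(1) SM D'(1) W kv supp v] by blast
  then show False using M(2) by blast
qed

lemma card_forcing_set_ge:
  fixes W :: "'a \<Rightarrow> 'a \<Rightarrow> 'r::idom" and y :: "'i \<Rightarrow> 'a \<Rightarrow> 'r"
  assumes H: "simple_graph H" and D: "colour_class H D" and W: "ring_weighted_adjacency H W"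
    and M: "perfect_matching H M" "forcing_set H M S"
    and I: "finite I" and y: "\<And>i. i \<in> I \<Longrightarrow> kernel_vector H W (y i)"
    and indep: "\<And>c. (\<And>v. v \<in> verts H \<Longrightarrow> (\<Sum>i\<in>I. c i * y i v) = 0) \<Longrightarrow> \<forall>i\<in>I. c i = 0"
  shows "card I \<le> 2 * card S"
proof (rule ccontr)
  assume lt: "\<not> ?thesis"
  have S: "S \<subseteq> edges H" using M unfolding forcing_set_def perfect_matching_def by blast
  then have card_edge: "card e = 2" if "e \<in> S" for e
    using H that by (auto elim: simple_graph_edgeE)
  have fin: "finite (\<Union>S)"
  proof (rule finite_Union)
    show "finite S" using finite_subset[OF S finite_edges[OF H]] .
    show "finite e" if "e \<in> S" for e using card_edge[OF that] by (intro card_ge_0_finite) simp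
  qed
  have "card (\<Union>S) \<le> 2 * card S"
    using card_Union_le_sum_card[of S] card_edge by simp
  then have "card (\<Union>S) < card I" using lt by linarith
  then obtain c where c: "\<exists>i\<in>I. c i \<noteq> 0" "\<forall>t\<in>\<Union>S. (\<Sum>i\<in>I. c i * y i t) = 0"
    using nontrivial_vanishing_combination[OF fin I, of y] by blast
  have "(\<Sum>v\<in>verts H. W u v * (\<Sum>i\<in>I. c i * y i v)) = (\<Sum>i\<in>I. c i * (\<Sum>v\<in>verts H. W u v * y i v))"
    for u unfolding sum_distrib_left by (subst sum.swap) (simp add: mult.left_commute)
  then have "kernel_vector H W (\<lambda>v. \<Sum>i\<in>I. c i * y i v)"
    using y unfolding kernel_vector_def by simp
  then have "(\<Sum>i\<in>I. c i * y i v) = 0" if "v \<in> verts H" for v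
    using kernel_vector_eq_0_if_eq_0_on_forcing_set[OF H D W _ M _ that] c(2) by blast
  then have "\<forall>i\<in>I. c i = 0" by (rule indep)
  then show False using c(1) by blast
qed

section \<open>Cartesian products and cycles\<close>

lemma verts_cart_prod: "verts (cart_prod G K) = verts G \<times> verts K"
  by (simp add: cart_prod_def verts_def)

lemma cart_prod_edge_iff:
  "{(g, i), (g', j)} \<in> edges (cart_prod G K) \<longleftrightarrow>
     (g = g' \<and> g \<in> verts G \<and> {i, j} \<in> edges K) \<or> (i = j \<and> i \<in> verts K \<and> {g, g'} \<in> edges G)"
    (is "_ \<longleftrightarrow> ?column \<or> ?layer")
proof
  assume "{(g, i), (g', j)} \<in> edges (cart_prod G K)"
  then consider
      a h h' where "{(g, i), (g', j)} = {(a, h), (a, h')}" "a \<in> verts G" "{h, h'} \<in> edges K"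
    | a a' h where "{(g, i), (g', j)} = {(a, h), (a', h)}" "{a, a'} \<in> edges G" "h \<in> verts K"
    unfolding cart_prod_def edges_def by auto
  then show "?column \<or> ?layer"
    by cases (auto simp: doubleton_eq_iff insert_commute)
next
  assume "?column \<or> ?layer"
  then show "{(g, i), (g', j)} \<in> edges (cart_prod G K)"
    unfolding cart_prod_def edges_def by auto
qed

lemma cart_prod_edgeE:
  assumes "e \<in> edges (cart_prod G K)"
  obtains g i g' j where "e = {(g, i), (g', j)}"
  using assms unfolding cart_prod_def edges_def by auto

lemma simple_graph_cart_prod:
  assumes G: "simple_graph G" and K: "simple_graph K"
  shows "simple_graph (cart_prod G K)"
  unfolding simple_graph_def
proof (intro conjI ballI)
  show "finite (verts (cart_prod G K))"
    using G K by (simp add: verts_cart_prod simple_graph_def)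
  fix e assume "e \<in> edges (cart_prod G K)"
  moreover from this obtain g i g' j where e: "e = {(g, i), (g', j)}" by (rule cart_prod_edgeE)
  ultimately have "(g = g' \<and> g \<in> verts G \<and> {i, j} \<in> edges K) \<or>
      (i = j \<and> i \<in> verts K \<and> {g, g'} \<in> edges G)"
    by (simp add: cart_prod_edge_iff)
  then have "(g, i) \<noteq> (g', j) \<and> (g, i) \<in> verts (cart_prod G K) \<and> (g', j) \<in> verts (cart_prod G K)"
    using simple_graph_edge_verts[OF G] simple_graph_edge_verts[OF K]
    by (auto simp: verts_cart_prod)
  then show "\<exists>u v. u \<noteq> v \<and> u \<in> verts (cart_prod G K) \<and> v \<in> verts (cart_prod G K) \<and> e = {u, v}"
    using e by blast
qed

lemma colour_class_cart_prod:
  assumes X: "colour_class G X" and Y: "colour_class K Y"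
  shows "colour_class (cart_prod G K) {(g, h). g \<in> X \<longleftrightarrow> h \<in> Y}"
  unfolding colour_class_def
proof (intro allI impI)
  fix u v assume uv: "{u, v} \<in> edges (cart_prod G K)"
  obtain g i g' j where u: "u = (g, i)" and v: "v = (g', j)" by fastforce
  from uv consider "g = g'" "{i, j} \<in> edges K" | "i = j" "{g, g'} \<in> edges G"
    unfolding u v cart_prod_edge_iff by blast
  then show "u \<in> {(g, h). g \<in> X \<longleftrightarrow> h \<in> Y} \<longleftrightarrow> v \<notin> {(g, h). g \<in> X \<longleftrightarrow> h \<in> Y}"
  proof cases
    case 1
    then have "i \<in> Y \<longleftrightarrow> j \<notin> Y" using Y unfolding colour_class_def by blast
    then show ?thesis using 1(1) unfolding u v by simp
  next
    case 2
    then have "g \<in> X \<longleftrightarrow> g' \<notin> X" using X unfolding colour_class_def by blast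
    then show ?thesis using 2(1) unfolding u v by (simp, blast)
  qed
qed

lemma bipartite_colour_class:
  assumes "bipartite G"
  obtains X where "colour_class G X"
proof -
  obtain A B where AB: "A \<inter> B = {}" "\<forall>e\<in>edges G. \<exists>a b. a \<in> A \<and> b \<in> B \<and> e = {a, b}"
    using assms unfolding bipartite_def by blast
  have "u \<in> A \<longleftrightarrow> v \<notin> A" if uv: "{u, v} \<in> edges G" for u v
  proof -
    obtain a b where "a \<in> A" "b \<in> B" "{u, v} = {a, b}" using AB(2) uv by blast
    then show ?thesis using AB(1) by (auto simp: doubleton_eq_iff)
  qed
  then show ?thesis using that unfolding colour_class_def by blast
qed

lemma verts_cycle: "verts (cycle m) = {0..<m}"
  by (simp add: cycle_def verts_def)

lemma cycle_edge_iff: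
  "{i, j} \<in> edges (cycle m) \<longleftrightarrow> i < m \<and> j < m \<and> (j = Suc i mod m \<or> i = Suc j mod m)"
  unfolding cycle_def edges_def snd_conv
  by (auto simp: doubleton_eq_iff)

lemma simple_graph_cycle:
  assumes "2 \<le> m"
  shows "simple_graph (cycle m)"
  unfolding simple_graph_def
proof (intro conjI ballI)
  fix e assume "e \<in> edges (cycle m)"
  then obtain i where i: "i < m" "e = {i, Suc i mod m}" unfolding cycle_def edges_def by auto
  moreover have "Suc i mod m \<noteq> i" using assms i(1) by (cases "Suc i = m") auto
  ultimately show "\<exists>u v. u \<noteq> v \<and> u \<in> verts (cycle m) \<and> v \<in> verts (cycle m) \<and> e = {u, v}"
    by (intro exI[of _ i] exI[of _ "Suc i mod m"]) (auto simp: verts_cycle)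
qed (simp add: verts_cycle)

lemma colour_class_even_cycle:
  assumes "even m"
  shows "colour_class (cycle m) {i. even i}"
  unfolding colour_class_def
proof (intro allI impI)
  fix i j assume "{i, j} \<in> edges (cycle m)"
  then have "i < m" "j < m" "j = Suc i mod m \<or> i = Suc j mod m" by (simp_all add: cycle_edge_iff)
  moreover have "even (Suc l mod m) \<longleftrightarrow> odd l" if "l < m" for l
    using assms that by (cases "Suc l = m") auto
  ultimately show "i \<in> {i. even i} \<longleftrightarrow> j \<notin> {i. even i}" by auto
qed

section \<open>The product with an even cycle\<close>

locale bipartite_cycle_product =
  fixes G :: "'a graph" and X :: "'a set" and A :: "'a \<Rightarrow> 'a \<Rightarrow> 'f::field" and k :: nat
  assumes simple: "simple_graph G" and X: "colour_class G X" and k: "2 \<le> k"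
    and A: "A \<in> involutory_wadj G"
begin

abbreviation H :: "('a \<times> nat) graph" where
  "H \<equiv> cart_prod G (cycle (2 * k))"

definition cyc_next :: "nat \<Rightarrow> nat" where
  "cyc_next i = Suc i mod (2 * k)"

definition cyc_prev :: "nat \<Rightarrow> nat" where
  "cyc_prev i = (i + (2 * k - 1)) mod (2 * k)"

lemma cyc_next_eq: "i < 2 * k \<Longrightarrow> cyc_next i = (if Suc i = 2 * k then 0 else Suc i)"
  unfolding cyc_next_def by auto

lemma cyc_prev_eq: "i < 2 * k \<Longrightarrow> cyc_prev i = (if i = 0 then 2 * k - 1 else i - 1)"
  unfolding cyc_prev_def using k by (auto simp: mod_if)

lemma cyc_next_less: "i < 2 * k \<Longrightarrow> cyc_next i < 2 * k"
  and cyc_prev_less: "i < 2 * k \<Longrightarrow> cyc_prev i < 2 * k"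
  and cyc_next_prev: "i < 2 * k \<Longrightarrow> cyc_next (cyc_prev i) = i"
  and cyc_prev_next: "i < 2 * k \<Longrightarrow> cyc_prev (cyc_next i) = i"
  and cyc_next_neq: "i < 2 * k \<Longrightarrow> cyc_next i \<noteq> i"
  and cyc_prev_neq: "i < 2 * k \<Longrightarrow> cyc_prev i \<noteq> i"
  and cyc_next_neq_prev: "i < 2 * k \<Longrightarrow> cyc_next i \<noteq> cyc_prev i"
  using k by (auto simp: cyc_next_eq cyc_prev_eq)

lemma even_cyc_next: "i < 2 * k \<Longrightarrow> even (cyc_next i) \<longleftrightarrow> odd i"
  by (auto simp: cyc_next_eq) presburger

lemma verts_H: "verts H = verts G \<times> {0..<2 * k}"
  by (simp add: verts_cart_prod verts_cycle)

lemma simple_H: "simple_graph H"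
  using simple simple_graph_cycle k by (intro simple_graph_cart_prod) auto

lemma H_edge_iff:
  "{(g, i), (g', j)} \<in> edges H \<longleftrightarrow>
     (g = g' \<and> g \<in> verts G \<and> i < 2 * k \<and> (j = cyc_next i \<or> j = cyc_prev i)) \<or>
     (i = j \<and> i < 2 * k \<and> {g, g'} \<in> edges G)"
  unfolding cart_prod_edge_iff cycle_edge_iff verts_cycle cyc_next_def[symmetric]
  using cyc_next_less cyc_prev_less cyc_next_prev cyc_prev_next by auto

definition H_class :: "('a \<times> nat) set" where
  "H_class = {(g, i). g \<in> X \<longleftrightarrow> even i}"

lemma colour_class_H: "colour_class H H_class"
  using colour_class_cart_prod[OF X colour_class_even_cycle[of "2 * k"]] by (simp add: H_class_def)

lemma H_neighbour:
  assumes "{(g, i), w} \<in> edges H"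
  shows "w = (g, cyc_next i) \<or> w = (g, cyc_prev i) \<or> (\<exists>g'. w = (g', i) \<and> {g, g'} \<in> edges G)"
  using assms by (cases w) (auto simp: H_edge_iff)

lemma A_nonzero_iff: "g \<in> verts G \<Longrightarrow> g' \<in> verts G \<Longrightarrow> A g g' \<noteq> 0 \<longleftrightarrow> {g, g'} \<in> edges G"
  using A unfolding involutory_wadj_def weighted_adjacency_def adjacent_def by auto

lemma A_squared:
  "g \<in> verts G \<Longrightarrow> g' \<in> verts G \<Longrightarrow> (\<Sum>w\<in>verts G. A g w * A w g') = (if g = g' then 1 else 0)"
  using A unfolding involutory_wadj_def involutory_def by auto

lemma H_class_swap: "{v, w} \<in> edges H \<Longrightarrow> v \<in> H_class \<longleftrightarrow> w \<notin> H_class"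
  using colour_class_H unfolding colour_class_def by blast

lemma column_edge: "g \<in> verts G \<Longrightarrow> i < 2 * k \<Longrightarrow> {(g, i), (g, cyc_next i)} \<in> edges H"
  by (simp add: H_edge_iff)

definition column_mate :: "'a \<times> nat \<Rightarrow> 'a \<times> nat" where
  "column_mate p = (if p \<in> H_class then (fst p, cyc_next (snd p)) else (fst p, cyc_prev (snd p)))"

definition column_matching :: "('a \<times> nat) set set" where
  "column_matching = {{p, column_mate p} | p. p \<in> verts H}"

lemma column_mate:
  assumes "p \<in> verts H"
  shows "column_mate p \<in> verts H \<and> column_mate p \<noteq> p \<and> column_mate (column_mate p) = p \<and>
    {p, column_mate p} \<in> edges H"
proof -
  obtain g i where p: "p = (g, i)" "g \<in> verts G" "i < 2 * k" using assms verts_H by auto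
  show ?thesis
  proof (cases "p \<in> H_class")
    case True
    have "(g, cyc_next i) \<notin> H_class"
      using H_class_swap[OF column_edge[OF p(2,3)]] True p(1) by blast
    then show ?thesis
      using True p column_edge[OF p(2,3)] cyc_next_less cyc_prev_next cyc_next_neq
      by (auto simp: column_mate_def verts_H)
  next
    case False
    have edge: "{(g, cyc_prev i), (g, i)} \<in> edges H"
      using column_edge[OF p(2) cyc_prev_less[OF p(3)]] cyc_next_prev[OF p(3)] by simp
    then have "(g, cyc_prev i) \<in> H_class" using H_class_swap False p(1) by blast
    then show ?thesis
      using False p edge cyc_prev_less cyc_next_prev cyc_next_neq[of "cyc_prev i"]
      by (auto simp: column_mate_def verts_H insert_commute)
  qed
qed

lemma perfect_matching_column_matching: "perfect_matching H column_matching"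
  unfolding column_matching_def using column_mate by (rule perfect_matching_of_involution)

definition seed_layer :: "'a \<Rightarrow> nat" where
  "seed_layer g = (if g \<in> X then 0 else 1)"

definition column_seed :: "('a \<times> nat) set set" where
  "column_seed = {{(g, seed_layer g), (g, Suc (seed_layer g))} | g. g \<in> verts G}"

lemma column_seed_subset: "column_seed \<subseteq> column_matching"
proof
  fix e assume "e \<in> column_seed"
  then obtain g where g: "g \<in> verts G" "e = {(g, seed_layer g), (g, Suc (seed_layer g))}"
    unfolding column_seed_def by blast
  have "(g, seed_layer g) \<in> verts H \<inter> H_class" "cyc_next (seed_layer g) = Suc (seed_layer g)"
    using g(1) k by (auto simp: verts_H H_class_def seed_layer_def cyc_next_def)
  then show "e \<in> column_matching"
    unfolding column_matching_def column_mate_def using g(2) by force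
qed

lemma card_column_seed: "card column_seed = card (verts G)"
proof -
  have "column_seed = (\<lambda>g. {(g, seed_layer g), (g, Suc (seed_layer g))}) ` verts G"
    unfolding column_seed_def by blast
  moreover have "inj_on (\<lambda>g. {(g, seed_layer g), (g, Suc (seed_layer g))}) (verts G)"
    by (rule inj_onI) (auto simp: doubleton_eq_iff)
  ultimately show ?thesis by (simp add: card_image)
qed

text \<open>A perfect matching containing the seed is forced layer by layer, going down the cycle
  from layer \<open>0 = 2k\<close>: the seed settles layers \<open>1\<close> and \<open>2\<close>, and the vertices of layer \<open>i\<close>
  outside \<open>H_class\<close> are matched downwards once this is known for layers \<open>i + 1\<close> and \<open>i + 2\<close>.\<close>

definition matched_down :: "('a \<times> nat) set set \<Rightarrow> nat \<Rightarrow> bool" where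
  "matched_down M i \<longleftrightarrow> (\<forall>g\<in>verts G. (g, i) \<notin> H_class \<longrightarrow> mate M (g, i) = (g, cyc_prev i))"

lemma mate_eq_cyc_next:
  assumes M: "perfect_matching H M" and down: "matched_down M (cyc_next i)"
    and g: "g \<in> verts G" and i: "i < 2 * k" and cls: "(g, i) \<in> H_class"
  shows "mate M (g, i) = (g, cyc_next i)"
proof -
  have "(g, cyc_next i) \<notin> H_class" using H_class_swap[OF column_edge[OF g i]] cls by blast
  then have "mate M (g, cyc_next i) = (g, i)"
    using down g cyc_prev_next[OF i] unfolding matched_down_def by auto
  moreover have "(g, cyc_next i) \<in> verts H" using g cyc_next_less[OF i] by (simp add: verts_H)
  ultimately show ?thesis using mate_mate[OF simple_H M] by metis
qed

lemma matched_down_step: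
  assumes M: "perfect_matching H M" and i: "i < 2 * k"
    and down1: "matched_down M (cyc_next i)" and down2: "matched_down M (cyc_next (cyc_next i))"
  shows "matched_down M i"
  unfolding matched_down_def
proof (intro ballI impI)
  fix g assume g: "g \<in> verts G" and cls: "(g, i) \<notin> H_class"
  show "mate M (g, i) = (g, cyc_prev i)"
  proof (rule mate_eq_last_free_neighbour[OF simple_H M])
    show "(g, i) \<in> verts H" using g i by (simp add: verts_H)
    fix w assume w: "{(g, i), w} \<in> edges H" "w \<noteq> (g, cyc_prev i)"
    then have "w \<in> H_class" using H_class_swap cls by blast
    from w consider "w = (g, cyc_next i)" | g' where "w = (g', i)" "{g, g'} \<in> edges G"
      using H_neighbour by blast
    then show "mate M w \<noteq> (g, i)"
    proof cases
      case 1
      have "cyc_next (cyc_next i) \<noteq> i"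
        using cyc_next_neq_prev[OF i] cyc_prev_next[OF cyc_next_less[OF i]] by metis
      then show ?thesis
        using mate_eq_cyc_next[OF M down2 g cyc_next_less[OF i]] \<open>w \<in> H_class\<close> 1 by simp
    next
      case 2
      then have "g' \<in> verts G" "g' \<noteq> g" using simple_graph_edge_verts[OF simple] by blast+
      then show ?thesis using mate_eq_cyc_next[OF M down1 _ i] \<open>w \<in> H_class\<close> 2 by simp
    qed
  qed
qed

lemma matched_down_seed:
  assumes M: "perfect_matching H M" "column_seed \<subseteq> M" and i: "i \<in> {1, 2}"
  shows "matched_down M i"
  unfolding matched_down_def
proof (intro ballI impI)
  fix g assume g: "g \<in> verts G" and cls: "(g, i) \<notin> H_class"
  then have "i = Suc (seed_layer g)" "cyc_prev i = seed_layer g"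
    using i k by (auto simp: H_class_def seed_layer_def cyc_prev_eq)
  moreover have "{(g, seed_layer g), (g, Suc (seed_layer g))} \<in> M"
    using M(2) g unfolding column_seed_def by blast
  ultimately show "mate M (g, i) = (g, cyc_prev i)"
    using mate_eqI[OF M(1)] g i k by (auto simp: verts_H insert_commute)
qed

lemma matched_down_all:
  assumes M: "perfect_matching H M" "column_seed \<subseteq> M" and i: "i < 2 * k"
  shows "matched_down M i"
proof -
  have mod_next: "cyc_next (n mod (2 * k)) = Suc n mod (2 * k)" for n
    by (simp add: cyc_next_def mod_Suc_eq)
  have "matched_down M (n mod (2 * k)) \<and> matched_down M (Suc n mod (2 * k))"
    if "3 \<le> n" "n \<le> 2 * k + 1" for n
    using that(2)
  proof (induction rule: inc_induct)
    case base
    have "(2 * k + 1) mod (2 * k) = 1" "Suc (2 * k + 1) mod (2 * k) = 2"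
      using k by (simp_all add: mod_Suc)
    then show ?case using matched_down_seed[OF M] by simp
  next
    case (step n)
    then show ?case
      using matched_down_step[OF M(1), of "n mod (2 * k)"] k mod_next by auto
  qed
  then have layers: "matched_down M (n mod (2 * k))" if "3 \<le> n" "n \<le> 2 * k" for n
    using that by simp
  show ?thesis
  proof (cases "i \<in> {1, 2}")
    case True
    then show ?thesis by (rule matched_down_seed[OF M])
  next
    case False
    then have "i = 0 \<or> 3 \<le> i" by auto
    then show ?thesis using layers[of i] layers[of "2 * k"] i k by auto
  qed
qed

lemma column_seed_forcing: "forcing_set H column_matching column_seed"
  unfolding forcing_set_def
proof (intro conjI allI impI column_seed_subset)
  fix M assume "perfect_matching H M \<and> column_seed \<subseteq> M"
  then have M: "perfect_matching H M" "column_seed \<subseteq> M" by auto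
  have down: "mate M p = column_mate p" if "p \<in> verts H" "p \<notin> H_class" for p
    using matched_down_all[OF M] that unfolding matched_down_def column_mate_def verts_H by auto
  have "column_matching \<subseteq> M"
  proof
    fix e assume "e \<in> column_matching"
    then obtain p where p: "p \<in> verts H" "e = {p, column_mate p}"
      unfolding column_matching_def by blast
    show "e \<in> M"
    proof (cases "p \<in> H_class")
      case True
      let ?q = "column_mate p"
      have "?q \<in> verts H" "?q \<notin> H_class" "column_mate ?q = p"
        using column_mate[OF p(1)] H_class_swap True by blast+
      then show ?thesis
        using mate_in_matching(1)[OF simple_H M(1)] down p(2) by (metis insert_commute)
    next
      case False
      then show ?thesis using mate_in_matching(1)[OF simple_H M(1)] down p by metis
    qed
  qed
  then show "M = column_matching"
    by (rule perfect_matching_subset_eq[OF simple_H perfect_matching_column_matching M(1)])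
qed

text \<open>With \<open>s i = t ^ i\<close>, the three weights at layer \<open>i\<close> are the
  \<open>2 \<times> 2\<close> minors of the matrix with rows \<open>(1, 1, 1)\<close> and \<open>(s (i - 1), s i, s (i + 1))\<close>, so
  both sequences \<open>1\<close> and \<open>s\<close> satisfy the resulting three-term recurrence; the powers of \<open>t\<close>
  are pairwise distinct, so no weight vanishes, whatever the field.\<close>

definition t_pow :: "nat \<Rightarrow> 'f poly" where
  "t_pow i = monom 1 i"

definition layer_weight :: "nat \<Rightarrow> 'f poly" where
  "layer_weight i = t_pow (cyc_next i) - t_pow (cyc_prev i)"

definition up_weight :: "nat \<Rightarrow> 'f poly" where
  "up_weight i = t_pow (cyc_prev i) - t_pow i"

definition down_weight :: "nat \<Rightarrow> 'f poly" where
  "down_weight i = t_pow i - t_pow (cyc_next i)"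

lemma t_pow_eq_iff: "t_pow i = t_pow j \<longleftrightarrow> i = j"
  by (simp add: t_pow_def monom_eq_iff')

lemma weights_nonzero:
  assumes "i < 2 * k"
  shows "layer_weight i \<noteq> 0 \<and> up_weight i \<noteq> 0 \<and> down_weight i \<noteq> 0"
  using cyc_next_neq_prev[OF assms] cyc_next_neq[OF assms] cyc_prev_neq[OF assms]
  unfolding layer_weight_def up_weight_def down_weight_def by (auto simp: t_pow_eq_iff)

lemma weights_recurrence:
  assumes "r \<le> 1"
  shows "layer_weight i * t_pow i ^ r + up_weight i * t_pow (cyc_next i) ^ r
    + down_weight i * t_pow (cyc_prev i) ^ r = 0"
proof -
  have "r = 0 \<or> r = 1" using assms by auto
  then show ?thesis unfolding layer_weight_def up_weight_def down_weight_def
    by (auto simp: algebra_simps)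
qed

definition product_weight :: "'a \<times> nat \<Rightarrow> 'a \<times> nat \<Rightarrow> 'f poly" where
  "product_weight p q =
     (if snd q = snd p then layer_weight (snd p) * [:A (fst p) (fst q):] else 0)
     + (if q = (fst p, cyc_next (snd p)) then up_weight (snd p) else 0)
     + (if q = (fst p, cyc_prev (snd p)) then down_weight (snd p) else 0)"

lemma product_weight_row:
  assumes g: "g \<in> verts G" and i: "i < 2 * k"
  shows "(\<Sum>q\<in>verts H. product_weight (g, i) q * x q) =
    layer_weight i * (\<Sum>g'\<in>verts G. [:A g g':] * x (g', i))
    + up_weight i * x (g, cyc_next i) + down_weight i * x (g, cyc_prev i)"
proof -
  have fin: "finite (verts H)" using simple_H unfolding simple_graph_def by simp
  have "product_weight (g, i) q * x q =
      (if snd q = i then layer_weight i * ([:A g (fst q):] * x q) else 0)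
      + (if q = (g, cyc_next i) then up_weight i * x q else 0)
      + (if q = (g, cyc_prev i) then down_weight i * x q else 0)" for q
    by (simp add: product_weight_def algebra_simps)
  then have "(\<Sum>q\<in>verts H. product_weight (g, i) q * x q) =
      (\<Sum>q\<in>verts H. if snd q = i then layer_weight i * ([:A g (fst q):] * x q) else 0)
      + up_weight i * x (g, cyc_next i) + down_weight i * x (g, cyc_prev i)"
    using fin g cyc_next_less[OF i] cyc_prev_less[OF i] by (simp add: sum.distrib verts_H)
  also have "(\<Sum>q\<in>verts H. if snd q = i then layer_weight i * ([:A g (fst q):] * x q) else 0)
      = (\<Sum>g'\<in>verts G. \<Sum>j\<in>{0..<2 * k}.
           if j = i then layer_weight i * ([:A g g':] * x (g', j)) else 0)"
    unfolding verts_H sum.cartesian_product by (intro sum.cong) auto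
  also have "\<dots> = layer_weight i * (\<Sum>g'\<in>verts G. [:A g g':] * x (g', i))"
    using i by (simp add: sum_distrib_left)
  finally show ?thesis .
qed

lemma ring_weighted_adjacency_product_weight: "ring_weighted_adjacency H product_weight"
  unfolding ring_weighted_adjacency_def adjacent_def
proof (intro ballI)
  fix p q assume "p \<in> verts H" "q \<in> verts H"
  then obtain g i g' j where p: "p = (g, i)" "g \<in> verts G" "i < 2 * k"
    and q: "q = (g', j)" "g' \<in> verts G" "j < 2 * k" by (auto simp: verts_H)
  have w: "layer_weight i \<noteq> 0" "up_weight i \<noteq> 0" "down_weight i \<noteq> 0"
    using weights_nonzero[OF p(3)] by auto
  show "product_weight p q \<noteq> 0 \<longleftrightarrow> {p, q} \<in> edges H"
  proof (cases "j = i")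
    case True
    then have "product_weight p q = layer_weight i * [:A g g':]"
      using cyc_next_neq[OF p(3)] cyc_next_neq[OF cyc_prev_less[OF p(3)]] cyc_next_prev[OF p(3)]
      by (simp add: product_weight_def p q)
    then show ?thesis
      using True w A_nonzero_iff[OF p(2) q(2)] cyc_next_neq[OF p(3)]
        cyc_next_neq[OF cyc_prev_less[OF p(3)]] cyc_next_prev[OF p(3)]
      by (auto simp: p q H_edge_iff)
  next
    case False
    then show ?thesis
      using w cyc_next_neq_prev[OF p(3)] p(2) by (auto simp: product_weight_def p q H_edge_iff)
  qed
qed

text \<open>Since \<open>A\<^sup>2 = I\<close>, multiplying a layer of \<open>kernel_basis (g\<^sub>0, r)\<close> by \<open>A\<close> yields its neighbouring
  layers up to the scalars \<open>s j ^ r\<close>, so every row of \<open>product_weight\<close> reduces to the recurrence.\<close>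

definition kernel_basis :: "'a \<times> nat \<Rightarrow> 'a \<times> nat \<Rightarrow> 'f poly" where
  "kernel_basis p q = t_pow (snd q) ^ snd p *
     (if even (snd q) then (if fst q = fst p then 1 else 0) else [:A (fst q) (fst p):])"

lemma kernel_vector_kernel_basis:
  assumes g0: "g0 \<in> verts G" and r: "r \<le> 1"
  shows "kernel_vector H product_weight (kernel_basis (g0, r))"
  unfolding kernel_vector_def
proof
  fix u assume "u \<in> verts H"
  then obtain g i where u: "u = (g, i)" and g: "g \<in> verts G" and i: "i < 2 * k"
    by (auto simp: verts_H)
  let ?s = "\<lambda>j. t_pow j ^ r"
  have fin: "finite (verts G)" using simple unfolding simple_graph_def by simp
  have parity: "even (cyc_next i) \<longleftrightarrow> odd i" "even (cyc_prev i) \<longleftrightarrow> odd i"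
    using even_cyc_next[OF i] even_cyc_next[OF cyc_prev_less[OF i]] cyc_next_prev[OF i] by auto
  have "(\<Sum>q\<in>verts H. product_weight u q * kernel_basis (g0, r) q) =
    (if even i then [:A g g0:] else (if g = g0 then 1 else 0)) *
      (layer_weight i * ?s i + up_weight i * ?s (cyc_next i) + down_weight i * ?s (cyc_prev i))"
  proof (cases "even i")
    case True
    have "[:A g g':] * kernel_basis (g0, r) (g', i) = (if g' = g0 then [:A g g0:] * ?s i else 0)"
      for g'
      using True by (simp add: kernel_basis_def)
    then have "(\<Sum>g'\<in>verts G. [:A g g':] * kernel_basis (g0, r) (g', i)) = [:A g g0:] * ?s i"
      using g0 fin by simp
    then show ?thesis
      using True parity unfolding u product_weight_row[OF g i]
      by (simp add: kernel_basis_def algebra_simps)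
  next
    case False
    have "(\<Sum>g'\<in>verts G. [:A g g':] * kernel_basis (g0, r) (g', i))
        = ?s i * [:\<Sum>g'\<in>verts G. A g g' * A g' g0:]"
      using False by (simp add: kernel_basis_def mult_to_poly smult_sum algebra_simps)
    also have "\<dots> = ?s i * (if g = g0 then 1 else 0)"
      using A_squared[OF g g0] by (simp add: one_pCons)
    finally show ?thesis
      using False parity unfolding u product_weight_row[OF g i]
      by (simp add: kernel_basis_def algebra_simps)
  qed
  then show "(\<Sum>q\<in>verts H. product_weight u q * kernel_basis (g0, r) q) = 0"
    using weights_recurrence[OF r] by simp
qed

lemma kernel_basis_independent:
  assumes c: "\<And>v. v \<in> verts H \<Longrightarrow> (\<Sum>p\<in>verts G \<times> {0::nat, 1}. c p * kernel_basis p v) = 0"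
  shows "\<forall>p\<in>verts G \<times> {0::nat, 1}. c p = 0"
proof
  fix p assume "p \<in> verts G \<times> {0::nat, 1}"
  then obtain g r where p: "p = (g, r)" "g \<in> verts G" "r \<in> {0::nat, 1}" by auto
  have fin: "finite (verts G)" using simple unfolding simple_graph_def by simp
  have even_layer: "c (g, 0) + c (g, 1) * t_pow j = 0" if "even j" "j < 2 * k" for j
  proof -
    have "(\<Sum>p\<in>verts G \<times> {0::nat, 1}. c p * kernel_basis p (g, j))
        = (\<Sum>g'\<in>verts G. \<Sum>r\<in>{0::nat, 1}. c (g', r) * kernel_basis (g', r) (g, j))"
      by (rule sum.cartesian_product')
    also have "\<dots> = (\<Sum>g'\<in>verts G. if g' = g then c (g, 0) + c (g, 1) * t_pow j else 0)"
      using that by (intro sum.cong) (auto simp: kernel_basis_def)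
    also have "\<dots> = c (g, 0) + c (g, 1) * t_pow j" using p(2) fin by simp
    finally show ?thesis using c[of "(g, j)"] p(2) that by (simp add: verts_H)
  qed
  have "c (g, 1) * (t_pow 2 - t_pow 0)
      = (c (g, 0) + c (g, 1) * t_pow 2) - (c (g, 0) + c (g, 1) * t_pow 0)"
    by (simp add: algebra_simps)
  also have "\<dots> = 0" using even_layer[of 0] even_layer[of 2] k by simp
  finally have "c (g, 1) = 0" by (simp add: t_pow_eq_iff)
  moreover have "c (g, 0) = 0" using even_layer[of 0] k calculation by simp
  ultimately show "c p = 0" using p by auto
qed

lemma card_forcing_set_ge_card_verts:
  assumes "perfect_matching H M" "forcing_set H M S"
  shows "card (verts G) \<le> card S"
proof -
  have fin: "finite (verts G)" using simple unfolding simple_graph_def by simp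
  have kernel: "kernel_vector H product_weight (kernel_basis p)"
    if "p \<in> verts G \<times> {0::nat, 1}" for p
    using that kernel_vector_kernel_basis by auto
  have "card (verts G \<times> {0::nat, 1}) \<le> 2 * card S"
    using card_forcing_set_ge[OF simple_H colour_class_H ring_weighted_adjacency_product_weight
        assms _ kernel kernel_basis_independent] fin by simp
  then show ?thesis using fin by (simp add: card_cartesian_product)
qed

lemma min_forcing_number_H: "min_forcing_number H = card (verts G)"
  using min_forcing_number_eqI[OF simple_H perfect_matching_column_matching column_seed_forcing
      card_column_seed card_forcing_set_ge_card_verts] .

end

theorem theorem2p1:
  fixes G :: "'a graph" and n k :: nat
  assumes "simple_graph G"
    and "bipartite G"
    and "card (verts G) = n"
    and "k \<ge> 2"
    and "(involutory_wadj G :: ('a \<Rightarrow> 'a \<Rightarrow> 'f::field) set) \<noteq> {}"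
  shows "min_forcing_number (cart_prod G (cycle (2 * k))) = n"
proof -
  obtain X where "colour_class G X" using assms(2) by (rule bipartite_colour_class)
  moreover obtain A :: "'a \<Rightarrow> 'a \<Rightarrow> 'f" where "A \<in> involutory_wadj G" using assms(5) by blast
  ultimately interpret bipartite_cycle_product G X A k
    using assms(1,4) by unfold_locales
  show ?thesis using min_forcing_number_H assms(3) by simp
qed

end
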